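(* Let $r\ge 2$, $n\ge1$ and $\underline m=(m_0,m_1,m_2,m_3)\in\mathbb N^4$ with $\gcd(m_\ell,r)=n$ for a single $\ell\in\{0,1,2,3\}$ and $\gcd(m_i,r)=1$ for $i\ne\ell$. Let $t\in\{0,\dots,n-1\}$. (1) If $i<\ell$, the number of admissible paths from $(v_i,0)$ to $(v_\ell,t)$ all of whose vertices lie in levels $i$ and $\ell$ is $\frac rn$. (2) If $i>\ell$, the number of admissible paths from $(v_\ell,t)$ to $(v_i,0)$ all of whose vertices lie in levels $\ell$ and $i$ is $\frac rn$.
   Context: Let $r\ge 2$ and $N\ge 0$ be integers and $\underline m=(m_0,\dots,m_N)\in\mathbb N^{N+1}$. The skew product graph $L_{2N+1}\times_{\underline m}\mathbb Z_r$ is the directed graph with vertices $(v_i,k)$, $0\le i\le N$, $k\in\mathbb Z_r=\{0,1,\dots,r-1\}$, and edges $(e_{ij},k)$ for $0\le i\le j\le N$, $k\in\mathbb Z_r$, the edge $(e_{ij},k)$ having source $(v_i,k-m_i \bmod r)$ and range $(v_j,k)$. The vertices $(v_i,k)$, $k\in\mathbb Z_r$, form level $i$. A vertex $(v_l,k)$ is called distinguished if $0\le k<\gcd(m_l,r)$. For distinguished vertices $(v_i,s),(v_j,t)$, an admissible path from $(v_i,s)$ to $(v_j,t)$ is a finite path of positive length in the skew product graph with source $(v_i,s)$ and range $(v_j,t)$ none of whose vertices other than its source and range is distinguished. Here $N=3$. *)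

theory Defs
  imports Complex_Main
begin

text \<open>Skew product graph L_{2N+1} x_m Z_r.
  Vertex (v_l,k) is the pair (l,k) with l \<le> N, k < r.
  Edge (e_ij,k) is the triple (i,j,k) with i \<le> j \<le> N, k < r.\<close>

type_synonym vert = "nat \<times> nat"
type_synonym edge = "nat \<times> nat \<times> nat"

definition sp_edges :: "nat \<Rightarrow> nat \<Rightarrow> edge set" where
  "sp_edges N r = {(i,j,k). i \<le> j \<and> j \<le> N \<and> k < r}"

definition sp_src :: "nat \<Rightarrow> (nat \<Rightarrow> nat) \<Rightarrow> edge \<Rightarrow> vert" where
  "sp_src r m e = (case e of (i,j,k) \<Rightarrow> (i, nat ((int k - int (m i)) mod int r)))"

definition sp_rng :: "edge \<Rightarrow> vert" where
  "sp_rng e = (case e of (i,j,k) \<Rightarrow> (j,k))"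

definition sp_path :: "nat \<Rightarrow> nat \<Rightarrow> (nat \<Rightarrow> nat) \<Rightarrow> edge list \<Rightarrow> bool" where
  "sp_path N r m p \<longleftrightarrow> p \<noteq> [] \<and> set p \<subseteq> sp_edges N r \<and>
     (\<forall>q. Suc q < length p \<longrightarrow> sp_rng (p ! q) = sp_src r m (p ! Suc q))"

definition path_source :: "nat \<Rightarrow> (nat \<Rightarrow> nat) \<Rightarrow> edge list \<Rightarrow> vert" where
  "path_source r m p = sp_src r m (hd p)"

definition path_range :: "edge list \<Rightarrow> vert" where
  "path_range p = sp_rng (last p)"

definition path_vertices :: "nat \<Rightarrow> (nat \<Rightarrow> nat) \<Rightarrow> edge list \<Rightarrow> vert set" where
  "path_vertices r m p = sp_src r m ` set p \<union> sp_rng ` set p"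

definition interior_vertices :: "edge list \<Rightarrow> vert set" where
  "interior_vertices p = {sp_rng (p ! q) | q. Suc q < length p}"

definition distinguished :: "nat \<Rightarrow> (nat \<Rightarrow> nat) \<Rightarrow> vert \<Rightarrow> bool" where
  "distinguished r m v \<longleftrightarrow> snd v < gcd (m (fst v)) r"

definition admissible ::
  "nat \<Rightarrow> nat \<Rightarrow> (nat \<Rightarrow> nat) \<Rightarrow> vert \<Rightarrow> vert \<Rightarrow> edge list \<Rightarrow> bool" where
  "admissible N r m u w p \<longleftrightarrow>
     sp_path N r m p \<and> path_source r m p = u \<and> path_range p = w \<and>
     (\<forall>x \<in> interior_vertices p. \<not> distinguished r m x)"

end

(* An admissible path from (v_a,s) to (v_c,u) with a < c that never leaves levels a and c
   runs q times around the loop e_aa, crosses once by e_ac and then runs around e_cc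
   until it first hits (v_c,u).  Inside level a the residues form the orbit of s under
   translation by m_a, which returns to the distinguished vertex (v_a,s) exactly after
   r / gcd(m_a,r) steps, so q < r / gcd(m_a,r).  Inside level c the path ends at (v_c,u)
   iff the entry residue is congruent to u modulo gcd(m_c,r), and then the number of
   loops is forced.  Hence the paths are counted by the q < r / gcd(m_a,r) whose entry
   residue s + (q+1) m_a mod r is congruent to u modulo gcd(m_c,r).  When one of the two
   gcds is 1 and the other is n, this is r / n. *)

theory Submission
  imports Defs "HOL-Number_Theory.Cong"
begin

section \<open>Translation orbits in Z/r\<close>

lemma mod_add_Suc_mult: "(x + Suc j * M) mod (r::nat) = ((x + j * M) mod r + M) mod r"
  by (metis add.assoc mod_add_left_eq mult_Suc add.commute)

lemma mod_add_mult_mod_gcd: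
  fixes r M x j :: nat
  shows "((x + j * M) mod r) mod gcd M r = x mod gcd M r"
proof -
  have "((x + j * M) mod r) mod gcd M r = (x + j * M) mod gcd M r"
    by (simp add: mod_mod_cancel)
  also have "\<dots> = x mod gcd M r"
    by (metis dvd_mult gcd_dvd1 mod_add_self2 dvd_def mod_add_cong mod_mod_trivial
        mult.commute mod_mult_self2)
  finally show ?thesis .
qed

lemma mod_add_mult_period:
  fixes r M s :: nat
  shows "(s + (r div gcd M r) * M) mod r = s mod r"
proof -
  have "(r div gcd M r) * M = r * (M div gcd M r)"
    by (metis dvd_div_mult dvd_mult_div_cancel gcd_dvd1 gcd_dvd2 mult.commute div_mult_swap)
  thus ?thesis by simp
qed

lemma mod_add_mult_neq_below_period:
  fixes r M s j :: nat
  assumes "r > 0" "0 < j" "j < r div gcd M r"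
  shows "(s + j * M) mod r \<noteq> s mod r"
proof
  assume "(s + j * M) mod r = s mod r"
  hence "r dvd j * M"
    by (metis cong_def cong_add_lcancel_0_nat cong_0_iff)
  hence "r dvd j * gcd M r"
    by (simp add: gcd_mult_distrib_nat)
  define g where "g = gcd M r"
  have "g > 0" using assms(1) g_def by simp
  moreover have "g * (r div g) dvd g * j"
    using \<open>r dvd j * gcd M r\<close> g_def by (metis dvd_mult_div_cancel gcd_dvd2 mult.commute)
  ultimately have "r div g dvd j" by simp
  thus False using assms g_def by (simp add: dvd_imp_le leD)
qed

lemma mod_add_mult_not_less_gcd:
  fixes r M s j :: nat
  assumes "r > 0" "s < gcd M r" "0 < j" "j < r div gcd M r"
  shows "\<not> (s + j * M) mod r < gcd M r"
proof
  assume less: "(s + j * M) mod r < gcd M r"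
  have "s < r" using assms(1,2) gcd_le2_nat[of r M] by linarith
  have "(s + j * M) mod r = ((s + j * M) mod r) mod gcd M r" using less by simp
  also have "\<dots> = s" using mod_add_mult_mod_gcd assms(2) by simp
  finally show False
    using mod_add_mult_neq_below_period[OF assms(1,3,4), of s] \<open>s < r\<close> by simp
qed

lemma exists_mod_add_mult_eq:
  fixes r M y u :: nat
  assumes "r > 0" "y mod gcd M r = u"
  shows "\<exists>b. (y + b * M) mod r = u"
proof (cases "M = 0")
  case True
  thus ?thesis using assms by (intro exI[of _ 0]) simp
next
  case False
  define g where "g = gcd M r"
  obtain x z where xz: "M * x = r * z + g" using bezout_nat[OF False, of r] g_def by auto
  define d where "d = y div g"
  have y: "y = u + g * d"
    using assms(2) g_def d_def by (metis div_mult_mod_eq add.commute mult.commute)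
  have "u < r" using assms g_def
    by (metis False gcd_le2_nat gcd_nat.eq_neutr_iff less_le_trans mod_less_divisor not_gr0)
  obtain r' where r': "r = Suc r'" using assms(1) gr0_implies_Suc by blast
  text \<open>Bezout gives M x \<equiv> g, so adding (r - 1) d x multiples of M subtracts g d.\<close>
  have "y + (x * d * r') * M = u + g * d + d * r' * (M * x)"
    using y by (simp add: algebra_simps)
  also have "\<dots> = u + r * (d * g + d * r' * z)"
    using xz r' by (simp add: algebra_simps)
  finally have "(y + (x * d * r') * M) mod r = u" using \<open>u < r\<close> by simp
  thus ?thesis by blast
qed

definition first_hit :: "nat \<Rightarrow> nat \<Rightarrow> nat \<Rightarrow> nat \<Rightarrow> nat \<Rightarrow> bool" where
  "first_hit r M y u b \<longleftrightarrow>
     (y + b * M) mod r = u \<and> (\<forall>b' < b. (y + b' * M) mod r \<noteq> u)"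

lemma first_hit_Least:
  assumes "(y + b * M) mod r = u"
  shows "first_hit r M y u (LEAST b. (y + b * M) mod r = u)"
  unfolding first_hit_def using assms by (auto intro: LeastI dest: not_less_Least)

lemma first_hit_unique:
  assumes "first_hit r M y u b" "first_hit r M y u b'"
  shows "b = b'"
  using assms unfolding first_hit_def by (metis linorder_neqE_nat)

lemma first_hit_mod_gcd:
  assumes "first_hit r M y u b"
  shows "y mod gcd M r = u mod gcd M r"
  using assms mod_add_mult_mod_gcd[of y b M r] by (simp add: first_hit_def)

section \<open>Counting residues\<close>

lemma card_residue_class:
  fixes n r t :: nat
  assumes "n dvd r" "t < n"
  shows "card {x. x < r \<and> x mod n = t} = r div n"
proof -
  obtain k where rk: "r = n * k" using assms(1) by (auto simp: dvd_def)
  have "{x. x < r \<and> x mod n = t} = (\<lambda>j. t + n * j) ` {..<k}"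
  proof (intro set_eqI iffI)
    fix x assume "x \<in> {x. x < r \<and> x mod n = t}"
    hence "x < r" "x mod n = t" by auto
    hence "x = t + n * (x div n)" "x div n < k"
      using rk by (auto simp: less_mult_imp_div_less mult.commute)
    thus "x \<in> (\<lambda>j. t + n * j) ` {..<k}" by blast
  next
    fix x assume "x \<in> (\<lambda>j. t + n * j) ` {..<k}"
    then obtain j where j: "j < k" "x = t + n * j" by auto
    have "n * (j + 1) \<le> n * k" using j(1) by (intro mult_le_mono2) simp
    thus "x \<in> {x. x < r \<and> x mod n = t}" using j assms(2) rk by (simp add: distrib_left)
  qed
  moreover have "inj_on (\<lambda>j. t + n * j) {..<k}" using assms(2) by (auto simp: inj_on_def)
  ultimately show ?thesis using rk assms(2) by (simp add: card_image)
qed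

lemma card_multiples_residue_class:
  fixes M r n t :: nat
  assumes "coprime M r" "0 < r" "n dvd r" "t < n"
  shows "card {q. q < r \<and> ((q + 1) * M) mod r mod n = t} = r div n"
proof -
  define \<phi> where "\<phi> q = ((q + 1) * M) mod r" for q
  have inj: "inj_on \<phi> {..<r}"
  proof (rule inj_onI)
    fix x y assume "x \<in> {..<r}" "y \<in> {..<r}" "\<phi> x = \<phi> y"
    hence "[(x + 1) * M = (y + 1) * M] (mod r)" by (simp add: \<phi>_def cong_def)
    hence "[x + 1 = y + 1] (mod r)" using cong_mult_rcancel_nat[OF assms(1)] by blast
    hence "[x = y] (mod r)" by (metis cong_add_rcancel_nat)
    thus "x = y" using \<open>x \<in> {..<r}\<close> \<open>y \<in> {..<r}\<close> by (simp add: cong_def)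
  qed
  have surj: "\<phi> ` {..<r} = {..<r}"
    by (rule endo_inj_surj) (use inj assms(2) in \<open>auto simp: \<phi>_def\<close>)
  have image: "\<phi> ` {q. q < r \<and> \<phi> q mod n = t} = {x. x < r \<and> x mod n = t}"
  proof (intro set_eqI iffI)
    fix x assume "x \<in> \<phi> ` {q. q < r \<and> \<phi> q mod n = t}"
    thus "x \<in> {x. x < r \<and> x mod n = t}" using assms(2) by (auto simp: \<phi>_def)
  next
    fix x assume x: "x \<in> {x. x < r \<and> x mod n = t}"
    hence "x \<in> \<phi> ` {..<r}" using surj by simp
    then obtain q where "q < r" "x = \<phi> q" by auto
    thus "x \<in> \<phi> ` {q. q < r \<and> \<phi> q mod n = t}" using x by auto
  qed
  have "card {q. q < r \<and> \<phi> q mod n = t} = card (\<phi> ` {q. q < r \<and> \<phi> q mod n = t})"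
    by (intro card_image[symmetric] inj_on_subset[OF inj]) auto
  also have "\<dots> = r div n" using image card_residue_class assms(3,4) by simp
  finally show ?thesis by (simp add: \<phi>_def)
qed

section \<open>Paths in the skew product graph\<close>

lemma fst_sp_src [simp]: "fst (sp_src r m e) = fst e"
  by (simp add: sp_src_def split: prod.splits)

lemma sp_rng_eq: "sp_rng e = (fst (snd e), snd (snd e))"
  by (simp add: sp_rng_def split: prod.splits)

lemma sp_src_shift:
  assumes "x < r"
  shows "sp_src r m (j, c, (x + m j) mod r) = (j, x)"
proof -
  have "int ((x + m j) mod r) = (int x + int (m j)) mod int r"
    by (simp add: of_nat_mod)
  hence "(int ((x + m j) mod r) - int (m j)) mod int r = int x mod int r"
    by (metis add_diff_cancel_right' mod_diff_left_eq)
  also have "\<dots> = int x" using assms by simp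
  finally show ?thesis by (simp add: sp_src_def)
qed

lemma sp_edge_eqI:
  assumes "e \<in> sp_edges N r" "e' \<in> sp_edges N r"
    and "sp_src r m e = sp_src r m e'" "fst (snd e) = fst (snd e')"
  shows "e = e'"
proof -
  obtain i j k i' j' k' where e: "e = (i, j, k)" "e' = (i', j', k')" "k < r" "k' < r"
    using assms(1,2) by (auto simp: sp_edges_def)
  have "i' = i" using assms(3) e by (simp add: sp_src_def)
  with assms(3) e have "(int k - int (m i)) mod int r = (int k' - int (m i)) mod int r"
    by (simp add: sp_src_def eq_nat_nat_iff)
  hence "int k mod int r = int k' mod int r"
    by (metis add_diff_cancel_right' diff_add_cancel mod_add_left_eq)
  hence "k = k'" using e by (simp add: zmod_int[symmetric])
  thus ?thesis using e assms(4) \<open>i' = i\<close> by simp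
qed

lemma sp_path_range_level_mono:
  assumes "sp_path N r m p" "k \<le> k'" "k' < length p"
  shows "fst (snd (p ! k)) \<le> fst (snd (p ! k'))"
  using assms(2,3)
proof (induction k' rule: dec_induct)
  case (step k')
  have "p ! Suc k' \<in> sp_edges N r"
    using assms(1) step.prems by (auto simp: sp_path_def)
  have "fst (snd (p ! k')) = fst (sp_rng (p ! k'))"
    by (simp add: sp_rng_eq)
  also have "\<dots> = fst (p ! Suc k')"
    using assms(1) step.prems by (simp add: sp_path_def)
  also have "\<dots> \<le> fst (snd (p ! Suc k'))"
    using \<open>p ! Suc k' \<in> sp_edges N r\<close> by (auto simp: sp_edges_def)
  finally show ?case using step by simp
qed simp

lemma sp_path_two_levels:
  assumes "sp_path N r m p" "fst (path_range p) = c" "a < c"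
    and "\<forall>x \<in> path_vertices r m p. fst x \<in> {a, c}"
  obtains q where "q < length p"
    "\<And>k. k < length p \<Longrightarrow> fst (snd (p ! k)) = (if k < q then a else c)"
proof -
  define n where "n = length p"
  have "p \<noteq> []" using assms(1) by (simp add: sp_path_def)
  have level: "fst (snd (p ! k)) \<in> {a, c}" if "k < n" for k
  proof -
    have "sp_rng (p ! k) \<in> path_vertices r m p"
      using that by (simp add: path_vertices_def n_def)
    thus ?thesis using assms(4) by (force simp: sp_rng_eq)
  qed
  define q where "q = (LEAST k. fst (snd (p ! k)) = c)"
  have last_c: "fst (snd (p ! (n - 1))) = c"
    using assms(2) \<open>p \<noteq> []\<close> by (simp add: path_range_def last_conv_nth sp_rng_eq n_def)
  have "fst (snd (p ! q)) = c" unfolding q_def using last_c by (rule LeastI)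
  have "q \<le> n - 1" unfolding q_def using last_c by (rule Least_le)
  hence "q < n" using \<open>p \<noteq> []\<close> n_def by (cases p) auto
  moreover have "fst (snd (p ! k)) = (if k < q then a else c)" if "k < n" for k
  proof (cases "k < q")
    case True
    thus ?thesis using level[OF that] not_less_Least[of k] q_def by auto
  next
    case False
    have "c \<le> fst (snd (p ! k))"
      using sp_path_range_level_mono[OF assms(1), of q k] \<open>fst (snd (p ! q)) = c\<close> False that
      by (simp add: n_def)
    thus ?thesis using level[OF that] assms(3) False by auto
  qed
  ultimately show ?thesis using that n_def by blast
qed

definition crossing_residue :: "nat \<Rightarrow> (nat \<Rightarrow> nat) \<Rightarrow> nat \<Rightarrow> nat \<Rightarrow> nat \<Rightarrow> nat" where
  "crossing_residue r m a s q = (s + (q + 1) * m a) mod r"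

text \<open>The k-th edge of the path from (v_a,s) that takes q loops e_aa, then e_ac,
  then loops e_cc; the range of its q-th edge is (v_c, crossing_residue r m a s q).\<close>
definition two_level_edge ::
  "nat \<Rightarrow> (nat \<Rightarrow> nat) \<Rightarrow> nat \<Rightarrow> nat \<Rightarrow> nat \<Rightarrow> nat \<Rightarrow> nat \<Rightarrow> edge" where
  "two_level_edge r m a c s q k =
     (if k < q then (a, a, (s + (k + 1) * m a) mod r)
      else if k = q then (a, c, (s + (k + 1) * m a) mod r)
      else (c, c, (crossing_residue r m a s q + (k - q) * m c) mod r))"

definition two_level_path ::
  "nat \<Rightarrow> (nat \<Rightarrow> nat) \<Rightarrow> nat \<Rightarrow> nat \<Rightarrow> nat \<Rightarrow> nat \<Rightarrow> nat \<Rightarrow> edge list" where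
  "two_level_path r m a c s q b = map (two_level_edge r m a c s q) [0..<q + 1 + b]"

lemma length_two_level_path [simp]: "length (two_level_path r m a c s q b) = q + 1 + b"
  by (simp add: two_level_path_def)

lemma two_level_path_not_Nil [simp]: "two_level_path r m a c s q b \<noteq> []"
  by (simp add: two_level_path_def)

lemma nth_two_level_path [simp]:
  "k < q + 1 + b \<Longrightarrow> two_level_path r m a c s q b ! k = two_level_edge r m a c s q k"
  by (simp add: two_level_path_def del: upt_Suc)

lemma two_level_path_inj:
  assumes "a \<noteq> c" "two_level_path r m a c s q b = two_level_path r m a c s q' b'"
  shows "q = q'"
proof -
  have differ: "two_level_path r m a c s q b \<noteq> two_level_path r m a c s q' b'"
    if "q < q'" for q q' b b'
  proof
    assume "two_level_path r m a c s q b = two_level_path r m a c s q' b'"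
    hence "two_level_path r m a c s q b ! q = two_level_path r m a c s q' b' ! q" by simp
    hence "two_level_edge r m a c s q q = two_level_edge r m a c s q' q" using that by simp
    thus False using that assms(1) by (simp add: two_level_edge_def)
  qed
  show ?thesis using differ assms(2) by (metis linorder_neqE_nat)
qed

lemma range_level_two_level_edge:
  "fst (snd (two_level_edge r m a c s q k)) = (if k < q then a else c)"
  by (simp add: two_level_edge_def)

lemma sp_rng_two_level_edge_before:
  "k < q \<Longrightarrow> sp_rng (two_level_edge r m a c s q k) = (a, (s + (k + 1) * m a) mod r)"
  by (simp add: two_level_edge_def sp_rng_def)

lemma sp_rng_two_level_edge_after:
  "sp_rng (two_level_edge r m a c s q (q + d)) =
     (c, (crossing_residue r m a s q + d * m c) mod r)"
  by (cases d) (simp_all add: two_level_edge_def sp_rng_def crossing_residue_def)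

lemma interior_vertices_two_level_path:
  "interior_vertices (two_level_path r m a c s q b) =
     sp_rng ` two_level_edge r m a c s q ` {..<q + b}"
proof (intro set_eqI iffI)
  fix x assume "x \<in> interior_vertices (two_level_path r m a c s q b)"
  thus "x \<in> sp_rng ` two_level_edge r m a c s q ` {..<q + b}"
    by (auto simp: interior_vertices_def)
next
  fix x assume "x \<in> sp_rng ` two_level_edge r m a c s q ` {..<q + b}"
  then obtain k where "k < q + b" "x = sp_rng (two_level_path r m a c s q b ! k)" by auto
  thus "x \<in> interior_vertices (two_level_path r m a c s q b)"
    unfolding interior_vertices_def mem_Collect_eq by (intro exI[of _ k]) simp
qed

context
  fixes N r :: nat and m :: "nat \<Rightarrow> nat" and a c s u :: nat
  assumes r_pos: "r > 0" and a_less_c: "a < c" and c_le_N: "c \<le> N"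
    and s_distinguished: "s < gcd (m a) r" and u_distinguished: "u < gcd (m c) r"
begin

abbreviation E :: "nat \<Rightarrow> nat \<Rightarrow> edge" where
  "E \<equiv> two_level_edge r m a c s"

abbreviation P :: "nat \<Rightarrow> nat \<Rightarrow> edge list" where
  "P \<equiv> two_level_path r m a c s"

abbreviation y :: "nat \<Rightarrow> nat" where
  "y \<equiv> crossing_residue r m a s"

lemma s_less_r: "s < r"
  using gcd_le2_nat[of r "m a"] s_distinguished r_pos by linarith

lemma two_level_edge_in_sp_edges: "E q k \<in> sp_edges N r"
  using a_less_c c_le_N r_pos by (auto simp: two_level_edge_def sp_edges_def)

lemma sp_src_two_level_edge_0: "sp_src r m (E q 0) = (a, s)"
  using sp_src_shift[OF s_less_r, of m a] by (simp add: two_level_edge_def)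

lemma two_level_edge_chain: "sp_rng (E q k) = sp_src r m (E q (Suc k))"
proof -
  consider "Suc k \<le> q" | "k = q" | "q < k" by linarith
  thus ?thesis
  proof cases
    case 1
    thus ?thesis
      using mod_add_Suc_mult[of s "k + 1" "m a" r] sp_src_shift[of "(s + (k + 1) * m a) mod r" r m a]
        r_pos sp_rng_two_level_edge_before[of k q]
      by (auto simp: two_level_edge_def)
  next
    case 2
    thus ?thesis
      using sp_src_shift[of "y q" r m c] r_pos sp_rng_two_level_edge_after[of r m a c s q 0]
      by (simp add: two_level_edge_def crossing_residue_def)
  next
    case 3
    then obtain d where d: "k = q + d" by (metis less_imp_add_positive)
    thus ?thesis
      using 3 mod_add_Suc_mult[of "y q" d "m c" r] sp_src_shift[of "(y q + d * m c) mod r" r m c]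
        r_pos sp_rng_two_level_edge_after[of r m a c s q d]
      by (simp add: two_level_edge_def)
  qed
qed

lemma two_level_path_vertices: "\<forall>x \<in> path_vertices r m (P q b). fst x \<in> {a, c}"
  by (auto simp: path_vertices_def two_level_path_def two_level_edge_def sp_rng_def)

lemma admissible_two_level_path:
  assumes "q < r div gcd (m a) r" "first_hit r (m c) (y q) u b"
  shows "admissible N r m (a, s) (c, u) (P q b)"
proof -
  have "sp_path N r m (P q b)"
    using two_level_edge_chain two_level_edge_in_sp_edges
    by (auto simp: sp_path_def two_level_path_def simp del: upt_Suc)
  moreover have "path_source r m (P q b) = (a, s)"
    using sp_src_two_level_edge_0 by (simp add: path_source_def hd_conv_nth)
  moreover have "path_range (P q b) = (c, u)"
    using assms(2) sp_rng_two_level_edge_after[of r m a c s q b]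
    by (simp add: path_range_def last_conv_nth first_hit_def)
  moreover have "\<forall>x \<in> interior_vertices (P q b). \<not> distinguished r m x"
  proof
    fix x assume "x \<in> interior_vertices (P q b)"
    then obtain k where "k < q + b" and x: "x = sp_rng (E q k)"
      by (auto simp: interior_vertices_two_level_path)
    show "\<not> distinguished r m x"
    proof (cases "k < q")
      case True
      have "\<not> (s + (k + 1) * m a) mod r < gcd (m a) r"
        using mod_add_mult_not_less_gcd[OF r_pos s_distinguished, of "k + 1"] assms(1) True
        by simp
      thus ?thesis using x True by (simp add: sp_rng_two_level_edge_before distinguished_def)
    next
      case False
      define d where "d = k - q"
      have k: "k = q + d" and "d < b" using False \<open>k < q + b\<close> d_def by auto
      have "(y q + d * m c) mod r \<noteq> u" using assms(2) \<open>d < b\<close> by (simp add: first_hit_def)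
      moreover have "(y q + d * m c) mod r mod gcd (m c) r = u"
        using first_hit_mod_gcd[OF assms(2)] mod_add_mult_mod_gcd[of "y q" d "m c" r]
          u_distinguished
        by simp
      ultimately have "\<not> (y q + d * m c) mod r < gcd (m c) r" by auto
      thus ?thesis
        using x k sp_rng_two_level_edge_after[of r m a c s q d] by (simp add: distinguished_def)
    qed
  qed
  ultimately show ?thesis by (simp add: admissible_def)
qed

lemma admissible_two_level_pathD:
  assumes "admissible N r m (a, s) (c, u) (P q b)"
  shows "q < r div gcd (m a) r" and "first_hit r (m c) (y q) u b"
proof -
  have interior: "\<not> distinguished r m (sp_rng (E q k))" if "k < q + b" for k
    using assms that by (simp add: admissible_def interior_vertices_two_level_path)
  show "q < r div gcd (m a) r"
  proof (rule ccontr)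
    define j where "j = r div gcd (m a) r"
    assume "\<not> q < r div gcd (m a) r"
    moreover have "j > 0" using r_pos j_def by (simp add: div_greater_zero_iff)
    ultimately have "j - 1 < q" using j_def by linarith
    text \<open>After a full period of loops the path is back at the distinguished vertex.\<close>
    hence "sp_rng (E q (j - 1)) = (a, (s + j * m a) mod r)"
      using sp_rng_two_level_edge_before[of "j - 1" q r m a c s] \<open>j > 0\<close> by simp
    also have "\<dots> = (a, s)"
      using mod_add_mult_period[of s r "m a"] s_less_r by (simp add: j_def)
    finally have "sp_rng (E q (j - 1)) = (a, s)" .
    thus False
      using interior[of "j - 1"] \<open>j - 1 < q\<close> s_distinguished by (simp add: distinguished_def)
  qed
  have "path_range (P q b) = (c, u)" using assms by (simp add: admissible_def)
  hence "(y q + b * m c) mod r = u"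
    using sp_rng_two_level_edge_after[of r m a c s q b] by (simp add: path_range_def last_conv_nth)
  moreover have "(y q + d * m c) mod r \<noteq> u" if "d < b" for d
    using interior[of "q + d"] that sp_rng_two_level_edge_after[of r m a c s q d] u_distinguished
    by (auto simp: distinguished_def)
  ultimately show "first_hit r (m c) (y q) u b" by (simp add: first_hit_def)
qed

lemma admissible_obtains_two_level_path:
  assumes "admissible N r m (a, s) (c, u) p"
    and "\<forall>x \<in> path_vertices r m p. fst x \<in> {a, c}"
  obtains q b where "p = P q b"
proof -
  have path: "sp_path N r m p" and "path_range p = (c, u)"
    and source: "sp_src r m (hd p) = (a, s)"
    using assms(1) by (auto simp: admissible_def path_source_def)
  then obtain q where "q < length p"
    and levels: "\<And>k. k < length p \<Longrightarrow> fst (snd (p ! k)) = (if k < q then a else c)"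
    using sp_path_two_levels a_less_c assms(2) by (metis fst_conv)
  define b where "b = length p - 1 - q"
  have len: "length p = q + 1 + b" using \<open>q < length p\<close> b_def by simp
  have "p ! k = E q k" if "k < length p" for k
    using that
  proof (induction k)
    case 0
    have "sp_src r m (p ! 0) = sp_src r m (E q 0)"
      using source path sp_src_two_level_edge_0 by (simp add: sp_path_def hd_conv_nth)
    thus ?case
      using 0 path two_level_edge_in_sp_edges levels range_level_two_level_edge
      by (intro sp_edge_eqI) (auto simp: sp_path_def)
  next
    case (Suc k)
    have "sp_src r m (p ! Suc k) = sp_rng (p ! k)"
      using path Suc.prems by (simp add: sp_path_def)
    also have "\<dots> = sp_src r m (E q (Suc k))"
      using Suc two_level_edge_chain by simp
    finally show ?case
      using Suc.prems path two_level_edge_in_sp_edges levels range_level_two_level_edge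
      by (intro sp_edge_eqI) (auto simp: sp_path_def)
  qed
  hence "p = P q b" using len by (intro nth_equalityI) simp_all
  thus ?thesis using that by blast
qed

theorem card_admissible_two_levels:
  "card {p. admissible N r m (a, s) (c, u) p \<and> (\<forall>x \<in> path_vertices r m p. fst x \<in> {a, c})}
   = card {q. q < r div gcd (m a) r \<and> y q mod gcd (m c) r = u}"
proof -
  define Q where "Q = {q. q < r div gcd (m a) r \<and> y q mod gcd (m c) r = u}"
  define B where "B q = (LEAST b. (y q + b * m c) mod r = u)" for q
  have hit_B: "first_hit r (m c) (y q) u (B q)" if q: "q \<in> Q" for q
  proof -
    obtain b where "(y q + b * m c) mod r = u"
      using exists_mod_add_mult_eq[OF r_pos, of "y q" "m c" u] q by (auto simp: Q_def)
    thus ?thesis unfolding B_def by (rule first_hit_Least)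
  qed
  have "{p. admissible N r m (a, s) (c, u) p \<and> (\<forall>x \<in> path_vertices r m p. fst x \<in> {a, c})}
        = (\<lambda>q. P q (B q)) ` Q"
  proof (intro set_eqI iffI)
    fix p
    assume "p \<in> {p. admissible N r m (a, s) (c, u) p \<and>
                  (\<forall>x \<in> path_vertices r m p. fst x \<in> {a, c})}"
    hence "admissible N r m (a, s) (c, u) p" "\<forall>x \<in> path_vertices r m p. fst x \<in> {a, c}"
      by auto
    then obtain q b where p: "p = P q b" by (rule admissible_obtains_two_level_path)
    hence adm: "admissible N r m (a, s) (c, u) (P q b)"
      using \<open>admissible N r m (a, s) (c, u) p\<close> by simp
    have hit: "first_hit r (m c) (y q) u b"
      by (rule admissible_two_level_pathD(2)[OF adm])
    have "q \<in> Q"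
      using admissible_two_level_pathD(1)[OF adm] first_hit_mod_gcd[OF hit] u_distinguished
      by (simp add: Q_def)
    moreover have "b = B q" using hit hit_B[OF \<open>q \<in> Q\<close>] by (rule first_hit_unique)
    ultimately show "p \<in> (\<lambda>q. P q (B q)) ` Q" using p by blast
  next
    fix p assume "p \<in> (\<lambda>q. P q (B q)) ` Q"
    then obtain q where "q \<in> Q" "p = P q (B q)" by blast
    thus "p \<in> {p. admissible N r m (a, s) (c, u) p \<and>
                  (\<forall>x \<in> path_vertices r m p. fst x \<in> {a, c})}"
      using admissible_two_level_path[of q "B q"] hit_B[OF \<open>q \<in> Q\<close>] two_level_path_vertices
      by (simp add: Q_def)
  qed
  moreover have "inj_on (\<lambda>q. P q (B q)) Q"
  proof (rule inj_onI)
    fix q q' assume "P q (B q) = P q' (B q')"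
    with a_less_c show "q = q'" by (intro two_level_path_inj[of a c]) simp_all
  qed
  ultimately show ?thesis by (simp add: card_image Q_def)
qed

end

corollary card_admissible_from_coprime_level:
  assumes "r > 0" "a < c" "c \<le> N" "coprime (m a) r" "gcd (m c) r = n" "t < n"
  shows "card {p. admissible N r m (a, 0) (c, t) p \<and>
                 (\<forall>x \<in> path_vertices r m p. fst x \<in> {a, c})} = r div n"
proof -
  have "gcd (m a) r = 1" using assms(4) by simp
  have "card {p. admissible N r m (a, 0) (c, t) p \<and>
                 (\<forall>x \<in> path_vertices r m p. fst x \<in> {a, c})}
        = card {q. q < r div gcd (m a) r \<and> crossing_residue r m a 0 q mod gcd (m c) r = t}"
    by (rule card_admissible_two_levels) (simp_all add: assms \<open>gcd (m a) r = 1\<close>)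
  also have "\<dots> = card {q. q < r \<and> ((q + 1) * m a) mod r mod n = t}"
    using \<open>gcd (m a) r = 1\<close> assms(5) by (simp add: crossing_residue_def)
  also have "\<dots> = r div n"
    using card_multiples_residue_class[OF assms(4,1) _ assms(6)] assms(5) by (metis gcd_dvd2)
  finally show ?thesis .
qed

corollary card_admissible_to_coprime_level:
  assumes "r > 0" "a < c" "c \<le> N" "gcd (m a) r = n" "coprime (m c) r" "t < n"
  shows "card {p. admissible N r m (a, t) (c, 0) p \<and>
                 (\<forall>x \<in> path_vertices r m p. fst x \<in> {a, c})} = r div n"
proof -
  have "gcd (m c) r = 1" using assms(5) by simp
  have "card {p. admissible N r m (a, t) (c, 0) p \<and>
                 (\<forall>x \<in> path_vertices r m p. fst x \<in> {a, c})}
        = card {q. q < r div gcd (m a) r \<and> crossing_residue r m a t q mod gcd (m c) r = 0}"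
    by (rule card_admissible_two_levels) (simp_all add: assms \<open>gcd (m c) r = 1\<close>)
  also have "\<dots> = r div n"
    using \<open>gcd (m c) r = 1\<close> assms(4) by simp
  finally show ?thesis .
qed

theorem lemma3p2:
  fixes r n l i t :: nat and m :: "nat \<Rightarrow> nat"
  assumes "r \<ge> 2" and "n \<ge> 1" and "l \<le> 3" and "i \<le> 3"
    and "gcd (m l) r = n"
    and "\<And>j. j \<le> 3 \<Longrightarrow> j \<noteq> l \<Longrightarrow> gcd (m j) r = 1"
    and "t < n"
  shows "(i < l \<longrightarrow>
           real (card {p. admissible 3 r m (i, 0) (l, t) p \<and>
                          (\<forall>x \<in> path_vertices r m p. fst x \<in> {i, l})})
             = real r / real n)
       \<and> (l < i \<longrightarrow>
           real (card {p. admissible 3 r m (l, t) (i, 0) p \<and>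
                          (\<forall>x \<in> path_vertices r m p. fst x \<in> {l, i})})
             = real r / real n)"
proof -
  have "r > 0" using assms(1) by simp
  have div: "real (r div n) = real r / real n"
    using assms(5) by (metis gcd_dvd2 real_of_nat_div)
  have coprime_i: "coprime (m i) r" if "i \<noteq> l"
    using assms(4,6) that by (simp add: coprime_iff_gcd_eq_1)
  show ?thesis
  proof (intro conjI impI)
    assume "i < l"
    have "card {p. admissible 3 r m (i, 0) (l, t) p \<and>
                   (\<forall>x \<in> path_vertices r m p. fst x \<in> {i, l})} = r div n"
      by (rule card_admissible_from_coprime_level)
        (use \<open>i < l\<close> assms(3,5,7) \<open>r > 0\<close> coprime_i in auto)
    thus "real (card {p. admissible 3 r m (i, 0) (l, t) p \<and>
                   (\<forall>x \<in> path_vertices r m p. fst x \<in> {i, l})}) = real r / real n"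
      using div by simp
  next
    assume "l < i"
    have "card {p. admissible 3 r m (l, t) (i, 0) p \<and>
                   (\<forall>x \<in> path_vertices r m p. fst x \<in> {l, i})} = r div n"
      by (rule card_admissible_to_coprime_level)
        (use \<open>l < i\<close> assms(4,5,7) \<open>r > 0\<close> coprime_i in auto)
    thus "real (card {p. admissible 3 r m (l, t) (i, 0) p \<and>
                   (\<forall>x \<in> path_vertices r m p. fst x \<in> {l, i})}) = real r / real n"
      using div by simp
  qed
qed

end
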